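(* Let $D$ be a perfect subgroup of a group $G$, let $F$ be a $D$-full subgroup of $G$, and let $\pi\colon S\to G$ be a surjective group homomorphism whose kernel is contained in the center of $S$. Then: (1) there exists a smallest subgroup $\tilde D\le S$ with $\pi(\tilde D)=D$ (i.e. $\tilde D$ is contained in every subgroup of $S$ mapping onto $D$), and likewise there is a smallest subgroup $\tilde F\le S$ with $\pi(\tilde F)=F$; (2) for any subgroups $\hat D,\hat F\le S$ with $\pi(\hat D)=D$ and $\pi(\hat F)=F$ one has $[\hat F,\hat F]=[\hat D,\hat F]=\tilde F$. In particular $\tilde D$ is perfect and $\tilde F$ is $\tilde D$-full.
   Context: A group is perfect if it equals its commutator subgroup. For subsets $X,Y$ of a group, $[X,Y]$ is the subgroup generated by all commutators $[a,b]=a^{-1}b^{-1}ab$, $a\in X$, $b\in Y$, and $X^Y$ is the subgroup generated by all $b^{-1}ab$, $a\in X$, $b\in Y$. For a subgroup $D\le G$, $L(D,G)$ denotes the lattice of subgroups of $G$ containing $D$; a subgroup $F\in L(D,G)$ is called $D$-full if $D^F=F$. *)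

theory Defs
  imports "HOL-Algebra.Algebra"
begin

definition grp_comm :: "('a, 'b) monoid_scheme \<Rightarrow> 'a \<Rightarrow> 'a \<Rightarrow> 'a" where
  "grp_comm G a b = inv\<^bsub>G\<^esub> a \<otimes>\<^bsub>G\<^esub> inv\<^bsub>G\<^esub> b \<otimes>\<^bsub>G\<^esub> a \<otimes>\<^bsub>G\<^esub> b"

definition comm_subgroup :: "('a, 'b) monoid_scheme \<Rightarrow> 'a set \<Rightarrow> 'a set \<Rightarrow> 'a set" where
  "comm_subgroup G A B = generate G {grp_comm G a b | a b. a \<in> A \<and> b \<in> B}"

definition conj_closure :: "('a, 'b) monoid_scheme \<Rightarrow> 'a set \<Rightarrow> 'a set \<Rightarrow> 'a set" where
  "conj_closure G A B = generate G {inv\<^bsub>G\<^esub> b \<otimes>\<^bsub>G\<^esub> a \<otimes>\<^bsub>G\<^esub> b | a b. a \<in> A \<and> b \<in> B}"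

definition perfect_subgroup :: "('a, 'b) monoid_scheme \<Rightarrow> 'a set \<Rightarrow> bool" where
  "perfect_subgroup G D \<longleftrightarrow> subgroup D G \<and> comm_subgroup G D D = D"

definition full_subgroup :: "('a, 'b) monoid_scheme \<Rightarrow> 'a set \<Rightarrow> 'a set \<Rightarrow> bool" where
  "full_subgroup G D F \<longleftrightarrow> subgroup D G \<and> subgroup F G \<and> D \<subseteq> F \<and> conj_closure G D F = F"

definition group_center :: "('a, 'b) monoid_scheme \<Rightarrow> 'a set" where
  "group_center G = {z \<in> carrier G. \<forall>x \<in> carrier G. z \<otimes>\<^bsub>G\<^esub> x = x \<otimes>\<^bsub>G\<^esub> z}"

end

theory Submission
  imports Defs
begin

text \<open>Since \<open>ker \<pi>\<close> is central, the commutator \<open>[a,b]\<close> in \<open>S\<close> depends only on \<open>\<pi> a\<close> and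
  \<open>\<pi> b\<close>; hence \<open>[A,B]\<close> depends only on \<open>\<pi>(A)\<close> and \<open>\<pi>(B)\<close>, and it lies in every subgroup \<open>H\<close>
  with \<open>\<pi>(A), \<pi>(B) \<subseteq> \<pi>(H)\<close>. In \<open>G\<close> one has \<open>[D,D] = D\<close> and \<open>[D,F] = F\<close> (a conjugate
  \<open>b\<^sup>-\<^sup>1ab\<close> equals \<open>a[a,b]\<close>). So \<open>\<tilde>D = [\<hat>D,\<hat>D]\<close> and \<open>\<tilde>F = [\<hat>D,\<hat>F]\<close>, formed from any lifts
  \<open>\<hat>D, \<hat>F\<close>, do not depend on the lifts, map onto \<open>D\<close> and \<open>F\<close>, and are contained in every lift.\<close>

lemma (in group) group_center_commute:
  "z \<in> group_center G \<Longrightarrow> x \<in> carrier G \<Longrightarrow> z \<otimes> x = x \<otimes> z"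
  unfolding group_center_def by blast

lemma (in group) group_center_mult:
  assumes "z \<in> group_center G" "w \<in> group_center G"
  shows "z \<otimes> w \<in> group_center G"
proof -
  have carrier: "z \<in> carrier G" "w \<in> carrier G"
    using assms by (auto simp: group_center_def)
  have "(z \<otimes> w) \<otimes> x = x \<otimes> (z \<otimes> w)" if "x \<in> carrier G" for x
  proof -
    have "(z \<otimes> w) \<otimes> x = z \<otimes> (x \<otimes> w)"
      using that carrier group_center_commute[OF assms(2) that] by (simp add: m_assoc)
    also have "\<dots> = x \<otimes> (z \<otimes> w)"
      using that carrier group_center_commute[OF assms(1) that] by (simp add: m_assoc[symmetric])
    finally show ?thesis .
  qed
  then show ?thesis
    using carrier by (simp add: group_center_def)
qed

lemma (in group) grp_comm_closed [simp]:
  "a \<in> carrier G \<Longrightarrow> b \<in> carrier G \<Longrightarrow> grp_comm G a b \<in> carrier G"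
  unfolding grp_comm_def by simp

lemma (in group) grp_comm_eq_inv_mult:
  "a \<in> carrier G \<Longrightarrow> b \<in> carrier G \<Longrightarrow> grp_comm G a b = inv (b \<otimes> a) \<otimes> (a \<otimes> b)"
  unfolding grp_comm_def by (simp add: inv_mult_group m_assoc)

lemma (in group) mult_central_assoc_commute:
  assumes "a \<in> carrier G" "b \<in> carrier G" "z \<in> group_center G" "w \<in> carrier G"
  shows "(a \<otimes> z) \<otimes> (b \<otimes> w) = (a \<otimes> b) \<otimes> (z \<otimes> w)"
proof -
  have "z \<in> carrier G" using assms(3) by (simp add: group_center_def)
  then have "(a \<otimes> z) \<otimes> (b \<otimes> w) = a \<otimes> (z \<otimes> b) \<otimes> w"
    using assms by (simp add: m_assoc)
  also have "\<dots> = (a \<otimes> b) \<otimes> (z \<otimes> w)"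
    using assms \<open>z \<in> carrier G\<close> group_center_commute[OF assms(3,2)] by (simp add: m_assoc)
  finally show ?thesis .
qed

lemma (in group) grp_comm_mult_central:
  assumes "a \<in> carrier G" "b \<in> carrier G" "z \<in> group_center G" "w \<in> group_center G"
  shows "grp_comm G (a \<otimes> z) (b \<otimes> w) = grp_comm G a b"
proof -
  have carrier: "z \<in> carrier G" "w \<in> carrier G"
    using assms(3,4) by (auto simp: group_center_def)
  let ?c = "z \<otimes> w"
  have c: "?c \<in> group_center G" "?c \<in> carrier G"
    using assms(3,4) carrier group_center_mult by auto
  have ab: "(a \<otimes> z) \<otimes> (b \<otimes> w) = (a \<otimes> b) \<otimes> ?c"
    using mult_central_assoc_commute[OF assms(1-3) carrier(2)] .
  have ba: "(b \<otimes> w) \<otimes> (a \<otimes> z) = (b \<otimes> a) \<otimes> ?c"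
    using mult_central_assoc_commute[OF assms(2,1,4) carrier(1)] group_center_commute[OF assms(4) carrier(1)]
    by simp
  \<comment> \<open>\<open>[x,y] = (yx)\<^sup>-\<^sup>1(xy)\<close>, and both products pick up the same central factor \<open>zw\<close>.\<close>
  have "grp_comm G (a \<otimes> z) (b \<otimes> w) = inv ((b \<otimes> a) \<otimes> ?c) \<otimes> ((a \<otimes> b) \<otimes> ?c)"
    using assms carrier by (simp only: grp_comm_eq_inv_mult m_closed ab ba)
  also have "\<dots> = inv ?c \<otimes> (inv (b \<otimes> a) \<otimes> (a \<otimes> b)) \<otimes> ?c"
    using assms c(2) by (simp add: inv_mult_group m_assoc)
  also have "\<dots> = inv ?c \<otimes> (?c \<otimes> grp_comm G a b)"
    using assms c group_center_commute[OF c(1), of "grp_comm G a b"]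
    by (simp add: m_assoc grp_comm_eq_inv_mult)
  also have "\<dots> = grp_comm G a b"
    using assms c(2) by (simp add: m_assoc[symmetric])
  finally show ?thesis .
qed

lemma (in group) subgroup_comm_subgroup:
  "A \<subseteq> carrier G \<Longrightarrow> B \<subseteq> carrier G \<Longrightarrow> subgroup (comm_subgroup G A B) G"
  unfolding comm_subgroup_def by (rule generate_is_subgroup) (blast intro: grp_comm_closed)

lemma (in group) subgroup_conj_closure:
  "A \<subseteq> carrier G \<Longrightarrow> B \<subseteq> carrier G \<Longrightarrow> subgroup (conj_closure G A B) G"
  unfolding conj_closure_def by (rule generate_is_subgroup) blast

lemma (in group) comm_subgroup_subset:
  assumes "subgroup H G" "A \<subseteq> H" "B \<subseteq> H"
  shows "comm_subgroup G A B \<subseteq> H"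
  unfolding comm_subgroup_def grp_comm_def
  by (rule generate_subgroup_incl[OF _ assms(1)])
     (use assms in \<open>blast intro: subgroup.m_closed subgroup.m_inv_closed\<close>)

lemma (in group) conj_closure_subset:
  assumes "subgroup H G" "A \<subseteq> H" "B \<subseteq> H"
  shows "conj_closure G A B \<subseteq> H"
  unfolding conj_closure_def
  by (rule generate_subgroup_incl[OF _ assms(1)])
     (use assms in \<open>blast intro: subgroup.m_closed subgroup.m_inv_closed\<close>)

lemma (in group) comm_subgroup_mono:
  "A \<subseteq> A' \<Longrightarrow> B \<subseteq> B' \<Longrightarrow> comm_subgroup G A B \<subseteq> comm_subgroup G A' B'"
  unfolding comm_subgroup_def by (rule mono_generate) blast

lemma (in group_hom) image_comm_subgroup:
  assumes "A \<subseteq> carrier G" "B \<subseteq> carrier G"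
  shows "h ` comm_subgroup G A B = comm_subgroup H (h ` A) (h ` B)"
proof -
  have "h (grp_comm G a b) = grp_comm H (h a) (h b)" if "a \<in> A" "b \<in> B" for a b
    using that assms by (auto simp: grp_comm_def hom_mult hom_inv subset_iff)
  then have generators: "h ` {grp_comm G a b | a b. a \<in> A \<and> b \<in> B}
      = {grp_comm H c d | c d. c \<in> h ` A \<and> d \<in> h ` B}"
    by (auto simp: image_iff) metis
  have "{grp_comm G a b | a b. a \<in> A \<and> b \<in> B} \<subseteq> carrier G"
    using assms by (blast intro: G.grp_comm_closed)
  then show ?thesis
    unfolding comm_subgroup_def generators[symmetric] by (rule generate_img[symmetric])
qed

lemma (in group_hom) image_conj_closure:
  assumes "A \<subseteq> carrier G" "B \<subseteq> carrier G"
  shows "h ` conj_closure G A B = conj_closure H (h ` A) (h ` B)"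
proof -
  have "h (inv\<^bsub>G\<^esub> b \<otimes>\<^bsub>G\<^esub> a \<otimes>\<^bsub>G\<^esub> b) = inv\<^bsub>H\<^esub> h b \<otimes>\<^bsub>H\<^esub> h a \<otimes>\<^bsub>H\<^esub> h b"
    if "a \<in> A" "b \<in> B" for a b
    using that assms by (auto simp: hom_mult hom_inv subset_iff)
  then have generators: "h ` {inv\<^bsub>G\<^esub> b \<otimes>\<^bsub>G\<^esub> a \<otimes>\<^bsub>G\<^esub> b | a b. a \<in> A \<and> b \<in> B}
      = {inv\<^bsub>H\<^esub> d \<otimes>\<^bsub>H\<^esub> c \<otimes>\<^bsub>H\<^esub> d | c d. c \<in> h ` A \<and> d \<in> h ` B}"
    by (auto simp: image_iff) metis
  have "{inv\<^bsub>G\<^esub> b \<otimes>\<^bsub>G\<^esub> a \<otimes>\<^bsub>G\<^esub> b | a b. a \<in> A \<and> b \<in> B} \<subseteq> carrier G"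
    using assms by blast
  then show ?thesis
    unfolding conj_closure_def generators[symmetric] by (rule generate_img[symmetric])
qed

lemma (in group) perfect_full_comm_subgroup_eq:
  assumes "perfect_subgroup G D" "full_subgroup G D F"
  shows "comm_subgroup G D F = F"
proof -
  have D: "subgroup D G" "comm_subgroup G D D = D" and F: "subgroup F G" "D \<subseteq> F"
    and conj: "conj_closure G D F = F"
    using assms unfolding perfect_subgroup_def full_subgroup_def by auto
  have carrier: "D \<subseteq> carrier G" "F \<subseteq> carrier G"
    using D(1) F(1) subgroup.subset by blast+
  let ?C = "comm_subgroup G D F"
  have C: "subgroup ?C G"
    using carrier by (rule subgroup_comm_subgroup)
  have D_sub_C: "D \<subseteq> ?C"
    using comm_subgroup_mono[of D D D F] D(2) F(2) by simp
  have "conj_closure G D F \<subseteq> ?C"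
    unfolding conj_closure_def
  proof (rule generate_subgroup_incl[OF _ C], safe)
    fix a b assume ab: "a \<in> D" "b \<in> F"
    then have "a \<in> carrier G" "b \<in> carrier G"
      using carrier by blast+
    have "grp_comm G a b \<in> ?C"
      unfolding comm_subgroup_def using ab by (intro generate.incl) blast
    moreover have "inv b \<otimes> a \<otimes> b = a \<otimes> grp_comm G a b"
      unfolding grp_comm_def using \<open>a \<in> carrier G\<close> \<open>b \<in> carrier G\<close> by (simp add: m_assoc[symmetric])
    ultimately show "inv b \<otimes> a \<otimes> b \<in> ?C"
      using ab D_sub_C C by (auto intro: subgroup.m_closed)
  qed
  then show ?thesis
    using comm_subgroup_subset[OF F(1) F(2) order_refl] conj by auto
qed

locale central_extension = S: group S + G: group G for S (structure) and G (structure) +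
  fixes \<pi>
  assumes hom: "\<pi> \<in> hom S G"
    and surj: "\<pi> ` carrier S = carrier G"
    and kernel_central: "kernel S G \<pi> \<subseteq> group_center S"
begin

sublocale hom: group_hom S G \<pi>
  using hom by unfold_locales

lemma image_eq_imp_central_factor:
  assumes "a \<in> carrier S" "a' \<in> carrier S" "\<pi> a = \<pi> a'"
  obtains z where "z \<in> group_center S" "a = a' \<otimes> z"
proof
  show "inv a' \<otimes> a \<in> group_center S"
    using assms kernel_central by (auto simp: kernel_def hom.hom_mult hom.hom_inv)
  show "a = a' \<otimes> (inv a' \<otimes> a)"
    using assms by (simp add: S.m_assoc[symmetric])
qed

lemma grp_comm_eq_if_image_eq:
  assumes "a \<in> carrier S" "b \<in> carrier S" "a' \<in> carrier S" "b' \<in> carrier S"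
    and "\<pi> a = \<pi> a'" "\<pi> b = \<pi> b'"
  shows "grp_comm S a b = grp_comm S a' b'"
proof -
  obtain z where "z \<in> group_center S" "a = a' \<otimes> z"
    using image_eq_imp_central_factor[OF assms(1,3,5)] .
  moreover obtain w where "w \<in> group_center S" "b = b' \<otimes> w"
    using image_eq_imp_central_factor[OF assms(2,4,6)] .
  ultimately show ?thesis
    using assms by (simp add: S.grp_comm_mult_central)
qed

lemma comm_subgroup_mono_image:
  assumes "A \<subseteq> carrier S" "B \<subseteq> carrier S" "A' \<subseteq> carrier S" "B' \<subseteq> carrier S"
    and "\<pi> ` A \<subseteq> \<pi> ` A'" "\<pi> ` B \<subseteq> \<pi> ` B'"
  shows "comm_subgroup S A B \<subseteq> comm_subgroup S A' B'"
  unfolding comm_subgroup_def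
proof (rule S.mono_generate, safe)
  fix a b assume "a \<in> A" "b \<in> B"
  moreover obtain a' where "a' \<in> A'" "\<pi> a = \<pi> a'"
    using assms(5) \<open>a \<in> A\<close> by blast
  moreover obtain b' where "b' \<in> B'" "\<pi> b = \<pi> b'"
    using assms(6) \<open>b \<in> B\<close> by blast
  ultimately show "\<exists>a' b'. grp_comm S a b = grp_comm S a' b' \<and> a' \<in> A' \<and> b' \<in> B'"
    using assms(1-4) grp_comm_eq_if_image_eq by blast
qed

lemma comm_subgroup_eq_if_image_eq:
  assumes "A \<subseteq> carrier S" "B \<subseteq> carrier S" "A' \<subseteq> carrier S" "B' \<subseteq> carrier S"
    and "\<pi> ` A = \<pi> ` A'" "\<pi> ` B = \<pi> ` B'"
  shows "comm_subgroup S A B = comm_subgroup S A' B'"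
  using assms by (intro equalityI comm_subgroup_mono_image) auto

lemma comm_subgroup_subset_if_image_subset:
  assumes "subgroup H S" "A \<subseteq> carrier S" "B \<subseteq> carrier S"
    and "\<pi> ` A \<subseteq> \<pi> ` H" "\<pi> ` B \<subseteq> \<pi> ` H"
  shows "comm_subgroup S A B \<subseteq> H"
proof -
  have "H \<subseteq> carrier S"
    using assms(1) by (rule subgroup.subset)
  then have "comm_subgroup S A B \<subseteq> comm_subgroup S H H"
    using assms by (intro comm_subgroup_mono_image)
  also have "\<dots> \<subseteq> H"
    using assms(1) by (rule S.comm_subgroup_subset) auto
  finally show ?thesis .
qed

lemma image_preimage:
  assumes "K \<subseteq> carrier G"
  shows "\<pi> ` (carrier S \<inter> \<pi> -` K) = K"
proof -
  have "K \<subseteq> \<pi> ` carrier S"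
    using assms surj by simp
  then show ?thesis
    by blast
qed

end

locale perfect_full_lift = central_extension S G \<pi> for S (structure) and G (structure) and \<pi> +
  fixes D F
  assumes perfect: "perfect_subgroup G D"
    and full: "full_subgroup G D F"
begin

text \<open>The full preimages serve as the lifts \<open>\<hat>D\<close>, \<open>\<hat>F\<close>.\<close>

definition D_tilde where
  "D_tilde = comm_subgroup S (carrier S \<inter> \<pi> -` D) (carrier S \<inter> \<pi> -` D)"

definition F_tilde where
  "F_tilde = comm_subgroup S (carrier S \<inter> \<pi> -` D) (carrier S \<inter> \<pi> -` F)"

lemma D_subset_F: "D \<subseteq> F"
  using full by (simp add: full_subgroup_def)

lemma image_preimage_D: "\<pi> ` (carrier S \<inter> \<pi> -` D) = D"
  using perfect by (intro image_preimage) (simp add: perfect_subgroup_def subgroup.subset)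

lemma image_preimage_F: "\<pi> ` (carrier S \<inter> \<pi> -` F) = F"
  using full by (intro image_preimage) (simp add: full_subgroup_def subgroup.subset)

lemma subgroup_D_tilde: "subgroup D_tilde S"
  unfolding D_tilde_def by (rule S.subgroup_comm_subgroup) auto

lemma subgroup_F_tilde: "subgroup F_tilde S"
  unfolding F_tilde_def by (rule S.subgroup_comm_subgroup) auto

lemma image_D_tilde: "\<pi> ` D_tilde = D"
  using perfect unfolding D_tilde_def perfect_subgroup_def
  by (simp add: hom.image_comm_subgroup image_preimage_D)

lemma image_F_tilde: "\<pi> ` F_tilde = F"
  using G.perfect_full_comm_subgroup_eq[OF perfect full] unfolding F_tilde_def
  by (simp add: hom.image_comm_subgroup image_preimage_D image_preimage_F)

lemma D_tilde_minimal: "subgroup H S \<Longrightarrow> \<pi> ` H = D \<Longrightarrow> D_tilde \<subseteq> H"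
  unfolding D_tilde_def
  by (rule comm_subgroup_subset_if_image_subset) (auto simp: image_preimage_D)

lemma F_tilde_minimal: "subgroup H S \<Longrightarrow> \<pi> ` H = F \<Longrightarrow> F_tilde \<subseteq> H"
  unfolding F_tilde_def using D_subset_F
  by (intro comm_subgroup_subset_if_image_subset) (auto simp: image_preimage_D image_preimage_F)

lemma comm_subgroup_lift_D_F:
  assumes "subgroup D' S" "\<pi> ` D' = D" "subgroup F' S" "\<pi> ` F' = F"
  shows "comm_subgroup S D' F' = F_tilde"
  unfolding F_tilde_def using assms
  by (intro comm_subgroup_eq_if_image_eq) (auto simp: subgroup.subset image_preimage_D image_preimage_F)

lemma comm_subgroup_lift_F_F:
  assumes "subgroup D' S" "\<pi> ` D' = D" "subgroup F' S" "\<pi> ` F' = F"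
  shows "comm_subgroup S F' F' = F_tilde"
proof
  show "comm_subgroup S F' F' \<subseteq> F_tilde"
    using assms(3,4) subgroup_F_tilde image_F_tilde
    by (intro comm_subgroup_subset_if_image_subset) (auto simp: subgroup.subset)
  have "comm_subgroup S D' F' \<subseteq> comm_subgroup S F' F'"
    using assms D_subset_F by (intro comm_subgroup_mono_image) (auto simp: subgroup.subset)
  then show "F_tilde \<subseteq> comm_subgroup S F' F'"
    using comm_subgroup_lift_D_F[OF assms] by simp
qed

lemma perfect_D_tilde: "perfect_subgroup S D_tilde"
proof -
  have "comm_subgroup S D_tilde D_tilde
      = comm_subgroup S (carrier S \<inter> \<pi> -` D) (carrier S \<inter> \<pi> -` D)"
    using subgroup_D_tilde image_D_tilde
    by (intro comm_subgroup_eq_if_image_eq) (auto simp: subgroup.subset image_preimage_D)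
  then show ?thesis
    using subgroup_D_tilde by (simp add: perfect_subgroup_def D_tilde_def)
qed

lemma full_D_tilde_F_tilde: "full_subgroup S D_tilde F_tilde"
proof -
  have D_tilde_subset: "D_tilde \<subseteq> F_tilde"
    using D_subset_F subgroup_F_tilde image_D_tilde image_F_tilde
    unfolding D_tilde_def
    by (intro comm_subgroup_subset_if_image_subset) (auto simp: image_preimage_D)
  have carrier: "D_tilde \<subseteq> carrier S" "F_tilde \<subseteq> carrier S"
    using subgroup_D_tilde subgroup_F_tilde by (auto simp: subgroup.subset)
  have "\<pi> ` conj_closure S D_tilde F_tilde = F"
    using full carrier by (simp add: hom.image_conj_closure image_D_tilde image_F_tilde full_subgroup_def)
  then have "F_tilde \<subseteq> conj_closure S D_tilde F_tilde"
    using F_tilde_minimal[OF S.subgroup_conj_closure[OF carrier]] by simp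
  moreover have "conj_closure S D_tilde F_tilde \<subseteq> F_tilde"
    using subgroup_F_tilde D_tilde_subset by (rule S.conj_closure_subset) simp
  ultimately show ?thesis
    using subgroup_D_tilde subgroup_F_tilde D_tilde_subset by (auto simp: full_subgroup_def)
qed

end

theorem lemma2p3:
  fixes G :: "('a, 'c) monoid_scheme" and S :: "('b, 'd) monoid_scheme"
    and \<pi> :: "'b \<Rightarrow> 'a" and D F :: "'a set"
  assumes "group G" and "group S"
    and "perfect_subgroup G D"
    and "full_subgroup G D F"
    and "\<pi> \<in> hom S G" and "\<pi> ` carrier S = carrier G"
    and "kernel S G \<pi> \<subseteq> group_center S"
  shows "\<exists>Dt Ft.
      subgroup Dt S \<and> \<pi> ` Dt = D \<and> (\<forall>H. subgroup H S \<and> \<pi> ` H = D \<longrightarrow> Dt \<subseteq> H) \<and>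
      subgroup Ft S \<and> \<pi> ` Ft = F \<and> (\<forall>H. subgroup H S \<and> \<pi> ` H = F \<longrightarrow> Ft \<subseteq> H) \<and>
      (\<forall>Dh Fh. subgroup Dh S \<and> \<pi> ` Dh = D \<and> subgroup Fh S \<and> \<pi> ` Fh = F \<longrightarrow>
          comm_subgroup S Fh Fh = Ft \<and> comm_subgroup S Dh Fh = Ft) \<and>
      perfect_subgroup S Dt \<and> full_subgroup S Dt Ft"
proof -
  interpret perfect_full_lift S G \<pi> D F
    using assms by (intro perfect_full_lift.intro central_extension.intro
      central_extension_axioms.intro perfect_full_lift_axioms.intro)
  show ?thesis
  proof (intro exI conjI allI impI)
    show "subgroup D_tilde S" "\<pi> ` D_tilde = D" "subgroup F_tilde S" "\<pi> ` F_tilde = F"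
      "perfect_subgroup S D_tilde" "full_subgroup S D_tilde F_tilde"
      by (fact subgroup_D_tilde image_D_tilde subgroup_F_tilde image_F_tilde
          perfect_D_tilde full_D_tilde_F_tilde)+
    show "D_tilde \<subseteq> H" if "subgroup H S \<and> \<pi> ` H = D" for H
      using that D_tilde_minimal by blast
    show "F_tilde \<subseteq> H" if "subgroup H S \<and> \<pi> ` H = F" for H
      using that F_tilde_minimal by blast
    fix D' F' assume lifts: "subgroup D' S \<and> \<pi> ` D' = D \<and> subgroup F' S \<and> \<pi> ` F' = F"
    then show "comm_subgroup S F' F' = F_tilde" "comm_subgroup S D' F' = F_tilde"
      using comm_subgroup_lift_F_F comm_subgroup_lift_D_F by blast+
  qed
qed

end
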